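(* Let $0\ne f,g\in L^2(\mathbb R,dx)$, $P\in\mathbb P$ and $0<\lambda<1$. Then \[ \int_{\mathcal S'_{\mathbb C}}S\big(\delta(\langle f,\cdot\rangle)\big)(\lambda Pu)\,\overline{S\big(\delta(\langle g,\cdot\rangle)\big)(\lambda Pu)}\,d\nu(u)=\frac{1}{2\pi\|f\|\|g\|}\,\frac{1}{\sqrt{1-\sigma_P^2\lambda^4}},\qquad \sigma_P:=\Big\langle\frac{Pf}{\|f\|},\frac{Pg}{\|g\|}\Big\rangle . \]
   Context: $\mathcal S$ is the real Schwartz space, $\mathcal S'$ the tempered distributions, $\langle\cdot,\cdot\rangle$ the (bilinear) dual pairing extending the $L^2(\mathbb R,dx)$ inner product, $\|\cdot\|$ the $L^2$ norm; the subscript $\mathbb C$ denotes complexification. For $0\ne h\in L^2(\mathbb R)$, Donsker's delta $\delta(\langle h,\cdot\rangle)$ is the Hida distribution on the white noise space whose $S$-transform is $S\delta(\langle h,\cdot\rangle)(\xi)=\frac{1}{\sqrt{2\pi}\|h\|}\exp\big(-\frac{\langle\xi,h\rangle^2}{2\|h\|^2}\big)$, $\xi\in\mathcal S_{\mathbb C}$. $\nu$ is the Gaussian measure on $\mathcal S'_{\mathbb C}$ with $\int\exp(i\,\mathrm{Re}\langle h,\bar u\rangle)d\nu(u)=\exp(-\tfrac14\langle h,\bar h\rangle)$, $h\in\mathcal S_{\mathbb C}$ (real and imaginary parts independent, each Gaussian with covariance $\tfrac12$ times the $L^2$ inner product). $\mathbb P$ is the set of maps $P=\sum_{m=1}^k\langle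 e_m,\cdot\rangle e_m:\mathcal S'_{\mathbb C}\to\mathcal S_{\mathbb C}$ with $e_1,\dots,e_k\in\mathcal S$ orthonormal in $L^2(\mathbb R)$, $k\in\mathbb N$; $P$ also acts on $L^2(\mathbb R)$ by the same formula. *)

theory Defs
  imports "HOL-Probability.Probability"
begin

text \<open>The real Hilbert space L^2(R,dx) is modelled by an abstract real inner product
space 'h; the real Schwartz space S is modelled by a linear subspace T of 'h.
An element xi of the complexification S_C (or L^2_C) is a pair (Re xi, Im xi).\<close>

definition pairC :: "'h::real_inner \<times> 'h \<Rightarrow> 'h \<Rightarrow> complex" where
  "pairC \<xi> h = complex_of_real (fst \<xi> \<bullet> h) + \<i> * complex_of_real (snd \<xi> \<bullet> h)"

definition S_donsker :: "'h::real_inner \<Rightarrow> 'h \<times> 'h \<Rightarrow> complex" where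
  "S_donsker h \<xi> =
     exp (- (pairC \<xi> h)\<^sup>2 / complex_of_real (2 * (norm h)\<^sup>2))
       / complex_of_real (sqrt (2 * pi) * norm h)"

text \<open>A (complex) tempered distribution u is represented by its action on real test
functions, u :: 'h => complex (extended complex-linearly to S_C).
The map P = sum_m <e_m,.> e_m applied to u, giving an element of S_C.\<close>
definition projP :: "nat \<Rightarrow> (nat \<Rightarrow> 'h::real_inner) \<Rightarrow> ('h \<Rightarrow> complex) \<Rightarrow> 'h \<times> 'h" where
  "projP k e u = ((\<Sum>m\<in>{1..k}. Re (u (e m)) *\<^sub>R e m), (\<Sum>m\<in>{1..k}. Im (u (e m)) *\<^sub>R e m))"

definition projL2 :: "nat \<Rightarrow> (nat \<Rightarrow> 'h::real_inner) \<Rightarrow> 'h \<Rightarrow> 'h" where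
  "projL2 k e f = (\<Sum>m\<in>{1..k}. (e m \<bullet> f) *\<^sub>R e m)"

text \<open>The Gaussian measure nu on S'_C, realised as the law of a random complex
distribution U(.)(w) over a probability space M: each sample U(.)(w) is real-linear
on the test space T, and for h = a + i b in S_C (a, b in T),
  integral exp(i Re <h, conj u>) dnu(u) = exp(-<h, conj h>/4),
where <h, conj u> = conj(u a) + i conj(u b) and <h, conj h> = |a|^2 + |b|^2.\<close>
definition complex_white_noise ::
  "'h::real_inner set \<Rightarrow> 'w measure \<Rightarrow> ('h \<Rightarrow> 'w \<Rightarrow> complex) \<Rightarrow> bool" where
  "complex_white_noise T M U \<longleftrightarrow>
     prob_space M \<and>
     (\<forall>a\<in>T. \<forall>b\<in>T. \<forall>r s::real. r *\<^sub>R a + s *\<^sub>R b \<in> T) \<and>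
     (\<forall>h\<in>T. U h \<in> borel_measurable M) \<and>
     (\<forall>w\<in>space M. \<forall>a\<in>T. \<forall>b\<in>T. \<forall>r s::real.
         U (r *\<^sub>R a + s *\<^sub>R b) w = complex_of_real r * U a w + complex_of_real s * U b w) \<and>
     (\<forall>a\<in>T. \<forall>b\<in>T.
         (\<integral>w. exp (\<i> * complex_of_real (Re (cnj (U a w) + \<i> * cnj (U b w)))) \<partial>M)
           = exp (- complex_of_real ((norm a)\<^sup>2 + (norm b)\<^sup>2) / 4))"

end

theory Submission
  imports Defs "HOL-Complex_Analysis.Complex_Analysis"
begin

text \<open>Put a = lam P f / norm f and b = lam P g / norm g. Since <lam P u, f> = lam u(P f), the
integrand is (2 pi norm f norm g)^-1 exp (-u(a)^2/2) exp (-conj u(b)^2/2). Each Gaussian factor is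
linearised, exp (-z^2/2) = E exp (i z x) with x standard normal, and by Fubini the nu-integral
becomes that of exp (i (u(a) x + conj u(b) y)). This exponent is Im u(q) + i Re u(p) for suitable
p, q; as Re u and Im u are uncorrelated, analytic continuation of the characteristic function
in the imaginary direction gives the value exp (-<a,b> x y). Integrating out y and then x leaves
E exp (<a,b>^2 x^2 / 2) = (1 - <a,b>^2)^(-1/2). Bessel's inequality, norm a, norm b <= lam < 1,
makes every exchange of integrals legitimate.\<close>

lemma sum_power_div_fact_le_exp:
  fixes x :: real
  assumes "0 \<le> x" "finite I"
  shows "(\<Sum>n\<in>I. x ^ n / fact n) \<le> exp x"
proof -
  have "summable (\<lambda>n. x ^ n / fact n)"
    using summable_exp_generic[of x]
    by (simp add: divide_inverse_commute field_class.field_divide_inverse)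
  then have "(\<Sum>n\<in>I. x ^ n / fact n) \<le> (\<Sum>n. x ^ n / fact n)"
    by (rule sum_le_suminf) (use assms in auto)
  also have "\<dots> = exp x"
    by (simp add: exp_def divide_inverse_commute field_class.field_divide_inverse)
  finally show ?thesis .
qed

lemma integrable_exp_abs:
  fixes X :: "'a \<Rightarrow> real"
  assumes "X \<in> borel_measurable M" and "\<And>t. integrable M (\<lambda>w. exp (t * X w))"
  shows "integrable M (\<lambda>w. exp (s * \<bar>X w\<bar>))"
proof (rule Bochner_Integration.integrable_bound)
  show "integrable M (\<lambda>w. exp (s * X w) + exp (- s * X w))"
    using assms(2)[of s] assms(2)[of "-s"] by (rule Bochner_Integration.integrable_add)
  show "AE w in M. norm (exp (s * \<bar>X w\<bar>)) \<le> norm (exp (s * X w) + exp (- s * X w))"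
  proof (rule AE_I2)
    fix w
    show "norm (exp (s * \<bar>X w\<bar>)) \<le> norm (exp (s * X w) + exp (- s * X w))"
      using exp_gt_zero[of "s * X w"] exp_gt_zero[of "- s * X w"] by (cases "X w \<ge> 0") auto
  qed
qed (use assms(1) in measurable)

lemma sums_integral_dominated:
  fixes f :: "nat \<Rightarrow> 'a \<Rightarrow> 'b::{banach, second_countable_topology}"
  assumes f_meas: "\<And>n. f n \<in> borel_measurable M"
    and b_int: "integrable M b"
    and partial_le_b: "\<And>I w. finite I \<Longrightarrow> (\<Sum>n\<in>I. norm (f n w)) \<le> b w"
    and f_sums: "\<And>w. (\<lambda>n. f n w) sums F w"
  shows "(\<lambda>n. integral\<^sup>L M (f n)) sums integral\<^sup>L M F"
proof -
  have f_int: "integrable M (f n)" for n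
    using partial_le_b[of "{n}"] b_int f_meas
    by (intro Bochner_Integration.integrable_bound[OF b_int])
       (auto intro!: AE_I2 order_trans[OF _ abs_ge_self])
  have "(\<lambda>n. integral\<^sup>L M (f n)) sums (\<integral>w. (\<Sum>n. f n w) \<partial>M)"
  proof (rule sums_integral[OF f_int])
    show "AE w in M. summable (\<lambda>n. norm (f n w))"
      using partial_le_b by (intro AE_I2 summableI_nonneg_bounded) auto
    show "summable (\<lambda>n. \<integral>w. norm (f n w) \<partial>M)"
    proof (rule summableI_nonneg_bounded)
      show "(\<Sum>n<m. \<integral>w. norm (f n w) \<partial>M) \<le> integral\<^sup>L M b" for m
      proof -
        have "(\<Sum>n<m. \<integral>w. norm (f n w) \<partial>M) = (\<integral>w. (\<Sum>n<m. norm (f n w)) \<partial>M)"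
          using f_int by (intro Bochner_Integration.integral_sum[symmetric]) auto
        also have "\<dots> \<le> integral\<^sup>L M b"
          using f_int partial_le_b[of "{..<m}"] by (intro integral_mono b_int) auto
        finally show ?thesis .
      qed
    qed simp
  qed
  moreover have "(\<lambda>w. \<Sum>n. f n w) = F"
    using f_sums by (simp add: fun_eq_iff sums_iff)
  ultimately show ?thesis
    by simp
qed

lemma integral_cexp_sums:
  fixes X :: "'a \<Rightarrow> real" and V :: "'a \<Rightarrow> complex"
  assumes [measurable]: "X \<in> borel_measurable M" "V \<in> borel_measurable M"
    and V_le: "\<And>w. norm (V w) \<le> 1"
    and exp_int: "\<And>t. integrable M (\<lambda>w. exp (t * X w))"
  shows "(\<lambda>n. (\<integral>w. of_real (X w) ^ n * V w \<partial>M) / fact n * z ^ n)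
           sums (\<integral>w. exp (z * of_real (X w)) * V w \<partial>M)"
proof -
  define f where "f n w = ((z * of_real (X w)) ^ n /\<^sub>R fact n) * V w" for n w
  have "(\<lambda>n. integral\<^sup>L M (f n)) sums (\<integral>w. exp (z * of_real (X w)) * V w \<partial>M)"
  proof (rule sums_integral_dominated)
    show "integrable M (\<lambda>w. exp (cmod z * \<bar>X w\<bar>))"
      by (rule integrable_exp_abs) (use exp_int in auto)
    show "(\<Sum>n\<in>I. norm (f n w)) \<le> exp (cmod z * \<bar>X w\<bar>)" if "finite I" for I w
    proof -
      have "(\<Sum>n\<in>I. norm (f n w)) \<le> (\<Sum>n\<in>I. (cmod z * \<bar>X w\<bar>) ^ n / fact n)"
        using V_le[of w]
        by (intro sum_mono)
           (simp add: f_def norm_mult norm_power abs_mult divide_inverse_commute mult_left_le)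
      also have "\<dots> \<le> exp (cmod z * \<bar>X w\<bar>)"
        by (rule sum_power_div_fact_le_exp) (use that in auto)
      finally show ?thesis .
    qed
    show "(\<lambda>n. f n w) sums (exp (z * of_real (X w)) * V w)" for w
      unfolding f_def by (intro sums_mult2 exp_converges)
  qed (unfold f_def, measurable)
  moreover have "integral\<^sup>L M (f n) = (\<integral>w. of_real (X w) ^ n * V w \<partial>M) / fact n * z ^ n" for n
  proof -
    have "f n = (\<lambda>w. z ^ n / fact n * (of_real (X w) ^ n * V w))"
      by (simp add: f_def fun_eq_iff scaleR_conv_of_real power_mult_distrib field_simps)
    then show ?thesis
      by (simp only: integral_mult_right_zero) (simp add: field_simps)
  qed
  ultimately show ?thesis
    by simp
qed

lemma integral_cexp_eq_entire:
  fixes X :: "'a \<Rightarrow> real" and V :: "'a \<Rightarrow> complex" and H :: "complex \<Rightarrow> complex"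
  assumes "X \<in> borel_measurable M" "V \<in> borel_measurable M" "\<And>w. norm (V w) \<le> 1"
    and "\<And>t. integrable M (\<lambda>w. exp (t * X w))"
    and H: "H holomorphic_on UNIV"
    and char: "\<And>r. (\<integral>w. exp (\<i> * of_real (r * X w)) * V w \<partial>M) = H (\<i> * of_real r)"
  shows "(\<integral>w. exp (z * of_real (X w)) * V w \<partial>M) = H z"
proof -
  define G where "G z = (\<integral>w. exp (z * of_real (X w)) * V w \<partial>M)" for z
  define c where "c n = (\<integral>w. of_real (X w) ^ n * V w \<partial>M) / fact n" for n
  have G_sums: "(\<lambda>n. c n * z ^ n) sums G z" for z
    unfolding c_def G_def by (rule integral_cexp_sums[OF assms(1-4)])
  have "(G has_field_derivative (\<Sum>n. diffs c n * z ^ n)) (at z)" for z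
  proof -
    have "((\<lambda>z. \<Sum>n. c n * z ^ n) has_field_derivative (\<Sum>n. diffs c n * z ^ n)) (at z)"
      using G_sums by (intro termdiffs_strong_converges_everywhere) (auto simp: sums_iff)
    moreover have "(\<lambda>z. \<Sum>n. c n * z ^ n) = G"
      using G_sums by (auto simp: sums_iff)
    ultimately show ?thesis by simp
  qed
  then have G_hol: "G holomorphic_on UNIV"
    by (auto simp: holomorphic_on_def field_differentiable_def
             intro: has_field_derivative_at_within)
  have limpt: "0 islimpt range (\<lambda>r. \<i> * of_real r)"
  proof (unfold islimpt_approachable, intro allI impI)
    fix e :: real assume "e > 0"
    then show "\<exists>x'\<in>range (\<lambda>r. \<i> * of_real r). x' \<noteq> 0 \<and> dist x' 0 < e"
      by (intro bexI[of _ "\<i> * of_real (e / 2)"])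
         (auto simp: norm_mult intro: range_eqI[where x = "e / 2"])
  qed
  have "G z - H z = 0"
  proof (rule analytic_continuation[where f = "\<lambda>z. G z - H z" and w = z and S = UNIV
        and U = "range (\<lambda>r. \<i> * of_real r)" and \<xi> = 0])
    show "(\<lambda>z. G z - H z) holomorphic_on UNIV"
      using G_hol H by (intro holomorphic_intros)
    show "G u - H u = 0" if "u \<in> range (\<lambda>r. \<i> * of_real r)" for u
      using that char by (auto simp: G_def mult.assoc)
  qed (use limpt in auto)
  then show ?thesis by (simp add: G_def)
qed

lemma prob_space_std_normal: "prob_space std_normal_distribution"
  using real_dist_normal_dist by (simp add: real_distribution_def)

lemma integrable_std_normal_exp: "integrable std_normal_distribution (\<lambda>x. exp (t * x))"
proof -
  have "std_normal_density x * exp (t * x) = exp (t\<^sup>2 / 2) * normal_density t 1 x" for x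
  proof -
    have "exp (- (x\<^sup>2 / 2)) * exp (t * x) = exp (t\<^sup>2 / 2) * exp (- ((x - t)\<^sup>2 / 2))"
      unfolding mult_exp_exp by (simp add: power2_eq_square field_simps)
    then show ?thesis by (simp add: std_normal_density_def normal_density_def)
  qed
  moreover have "integrable lborel (\<lambda>x. exp (t\<^sup>2 / 2) * normal_density t 1 x)"
    by auto
  ultimately show ?thesis by (subst integrable_density) auto
qed

lemma integral_std_normal_cexp:
  fixes z :: complex
  shows "(\<integral>x. exp (z * of_real x) \<partial>std_normal_distribution) = exp (z\<^sup>2 / 2)"
proof -
  have "(\<integral>x. exp (z * of_real x) * 1 \<partial>std_normal_distribution) = exp (z\<^sup>2 / 2)"
  proof (rule integral_cexp_eq_entire)
    show "(\<lambda>z. exp (z\<^sup>2 / 2)) holomorphic_on UNIV"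
      by (intro holomorphic_intros) auto
    show "(\<integral>x. exp (\<i> * of_real (r * x)) * 1 \<partial>std_normal_distribution) = exp ((\<i> * of_real r)\<^sup>2 / 2)"
      for r
      using fun_cong[OF char_std_normal_distribution, of r]
      by (simp add: char_def power_mult_distrib exp_of_real[symmetric])
  qed (auto intro: integrable_std_normal_exp)
  then show ?thesis by simp
qed

lemma integrable_std_normal_cexp:
  fixes z :: complex
  shows "integrable std_normal_distribution (\<lambda>x. exp (z * of_real x))"
  by (rule Bochner_Integration.integrable_bound[OF integrable_std_normal_exp[of "Re z"]]) auto

lemma integral_std_normal_exp:
  "(\<integral>x. exp (t * x) \<partial>std_normal_distribution) = exp (t\<^sup>2 / 2)"
proof -
  have "of_real (\<integral>x. exp (t * x) \<partial>std_normal_distribution)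
      = (\<integral>x. exp (of_real t * of_real x :: complex) \<partial>std_normal_distribution)"
    by (simp flip: of_real_mult add: exp_of_real)
  also have "\<dots> = of_real (exp (t\<^sup>2 / 2))"
    by (simp add: integral_std_normal_cexp exp_of_real[symmetric])
  finally show ?thesis
    by (simp only: of_real_eq_iff)
qed

lemma std_normal_exp_square:
  fixes \<beta> :: real
  assumes "\<beta> < 1"
  shows "integrable std_normal_distribution (\<lambda>x. exp (\<beta> * x\<^sup>2 / 2))"
    and "(\<integral>x. exp (\<beta> * x\<^sup>2 / 2) \<partial>std_normal_distribution) = 1 / sqrt (1 - \<beta>)"
proof -
  define s where "s = 1 / sqrt (1 - \<beta>)"
  have s_pos: "s > 0" and s2: "s\<^sup>2 = 1 / (1 - \<beta>)"
    using assms by (simp_all add: s_def power_divide)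
  have density: "std_normal_density x * exp (\<beta> * x\<^sup>2 / 2) = s * normal_density 0 s x" for x
  proof -
    have "sqrt (2 * pi * s\<^sup>2) = sqrt (2 * pi) * s"
      using s_pos by (simp add: real_sqrt_mult)
    moreover have "- x\<^sup>2 / (2 * s\<^sup>2) = - x\<^sup>2 / 2 + \<beta> * x\<^sup>2 / 2"
      using assms by (simp add: s2 field_simps)
    ultimately show ?thesis
      using s_pos by (simp add: std_normal_density_def normal_density_def mult_exp_exp)
  qed
  have "integrable lborel (\<lambda>x. s * normal_density 0 s x)"
    using s_pos by (intro Bochner_Integration.integrable_mult_right) auto
  then show "integrable std_normal_distribution (\<lambda>x. exp (\<beta> * x\<^sup>2 / 2))"
    by (subst integrable_density) (auto simp: density s_pos)
  have "(\<integral>x. exp (\<beta> * x\<^sup>2 / 2) \<partial>std_normal_distribution) = (\<integral>x. s * normal_density 0 s x \<partial>lborel)"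
    by (subst integral_density) (auto simp: density s_pos)
  also have "\<dots> = s"
    using s_pos by simp
  finally show "(\<integral>x. exp (\<beta> * x\<^sup>2 / 2) \<partial>std_normal_distribution) = 1 / sqrt (1 - \<beta>)"
    by (simp add: s_def)
qed

lemma borel_measurable_cnj [measurable]: "cnj \<in> borel_measurable borel"
  by (intro borel_measurable_continuous_onI continuous_intros)

lemma norm_exp_neg_square_le: "norm (exp (- z\<^sup>2 / 2)) \<le> exp ((Im z)\<^sup>2 / 2)"
  using zero_le_square[of "Re z"] by (simp add: power2_eq_square field_simps)

lemma integrable_bounded_by_exp_add:
  fixes h :: "'a \<Rightarrow> 'b::{banach, second_countable_topology}" and f g :: "'a \<Rightarrow> real"
  assumes "integrable M (\<lambda>w. exp (2 * f w))" "integrable M (\<lambda>w. exp (2 * g w))"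
    and "h \<in> borel_measurable M"
    and h_le: "\<And>w. w \<in> space M \<Longrightarrow> norm (h w) \<le> exp (f w + g w)"
  shows "integrable M h"
proof (rule Bochner_Integration.integrable_bound)
  show "integrable M (\<lambda>w. (exp (2 * f w) + exp (2 * g w)) / 2)"
    using assms(1,2) by auto
  show "AE w in M. norm (h w) \<le> norm ((exp (2 * f w) + exp (2 * g w)) / 2)"
  proof (rule AE_I2)
    fix w assume "w \<in> space M"
    have "0 \<le> (exp (f w) - exp (g w))\<^sup>2"
      by simp
    then have "exp (f w + g w) \<le> (exp (2 * f w) + exp (2 * g w)) / 2"
      unfolding exp_add exp_double by (simp add: power2_eq_square algebra_simps)
    then show "norm (h w) \<le> norm ((exp (2 * f w) + exp (2 * g w)) / 2)"
      using h_le[OF \<open>w \<in> space M\<close>] by (simp add: add_pos_pos)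
  qed
qed (rule assms(3))

lemma integral_gaussian_linearization:
  fixes Z V :: "'a \<Rightarrow> complex"
  assumes "sigma_finite_measure M"
    and [measurable]: "Z \<in> borel_measurable M" "V \<in> borel_measurable M"
    and "integrable M (\<lambda>w. exp ((Im (Z w))\<^sup>2 / 2) * norm (V w))"
  shows "(\<integral>w. exp (- (Z w)\<^sup>2 / 2) * V w \<partial>M)
       = (\<integral>x. (\<integral>w. exp (\<i> * Z w * of_real x) * V w \<partial>M) \<partial>std_normal_distribution)"
proof -
  interpret pair_sigma_finite M std_normal_distribution
    unfolding pair_sigma_finite_def
    using assms(1) prob_space_std_normal by (simp add: prob_space_imp_sigma_finite)
  define \<Psi> where "\<Psi> w x = exp (\<i> * Z w * of_real x) * V w" for w x
  have integral_\<Psi>: "(\<integral>x. \<Psi> w x \<partial>std_normal_distribution) = exp (- (Z w)\<^sup>2 / 2) * V w" for w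
    using integral_std_normal_cexp[of "\<i> * Z w"]
    by (simp add: \<Psi>_def mult.assoc power_mult_distrib)
  have integral_norm_\<Psi>:
    "(\<integral>x. norm (\<Psi> w x) \<partial>std_normal_distribution) = exp ((Im (Z w))\<^sup>2 / 2) * norm (V w)" for w
    using integral_std_normal_exp[of "- Im (Z w)"] by (simp add: \<Psi>_def norm_mult)
  have integrable_\<Psi>: "integrable (M \<Otimes>\<^sub>M std_normal_distribution) (case_prod \<Psi>)"
  proof (rule Fubini_integrable)
    show "integrable M (\<lambda>w. \<integral>x. norm (case_prod \<Psi> (w, x)) \<partial>std_normal_distribution)"
      using assms(4) by (simp add: integral_norm_\<Psi>)
    show "AE w in M. integrable std_normal_distribution (\<lambda>x. case_prod \<Psi> (w, x))"
      unfolding \<Psi>_def case_prod_conv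
      by (intro AE_I2 Bochner_Integration.integrable_mult_left integrable_std_normal_cexp)
  qed (unfold \<Psi>_def, measurable)
  have "(\<integral>w. exp (- (Z w)\<^sup>2 / 2) * V w \<partial>M) = (\<integral>w. (\<integral>x. \<Psi> w x \<partial>std_normal_distribution) \<partial>M)"
    by (simp only: integral_\<Psi>)
  also have "\<dots> = (\<integral>x. (\<integral>w. \<Psi> w x \<partial>M) \<partial>std_normal_distribution)"
    by (rule Fubini_integral[OF integrable_\<Psi>, symmetric])
  finally show ?thesis
    by (simp only: \<Psi>_def)
qed

lemma inner_sum_orthonormal:
  fixes e :: "nat \<Rightarrow> 'h::real_inner"
  assumes "finite I" and orth: "\<forall>m\<in>I. \<forall>n\<in>I. e m \<bullet> e n = (if m = n then 1 else 0)"
  shows "(\<Sum>m\<in>I. c m *\<^sub>R e m) \<bullet> (\<Sum>n\<in>I. d n *\<^sub>R e n) = (\<Sum>m\<in>I. c m * d m)"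
proof -
  have "(\<Sum>m\<in>I. c m *\<^sub>R e m) \<bullet> (\<Sum>n\<in>I. d n *\<^sub>R e n) = (\<Sum>m\<in>I. c m * (\<Sum>n\<in>I. d n * (e m \<bullet> e n)))"
    by (simp add: inner_sum_left inner_sum_right sum_distrib_left mult.assoc)
       (subst sum.swap, simp add: ac_simps)
  also have "\<dots> = (\<Sum>m\<in>I. c m * d m)"
  proof (rule sum.cong[OF refl])
    fix m assume "m \<in> I"
    then have "(\<Sum>n\<in>I. d n * (e m \<bullet> e n)) = (\<Sum>n\<in>I. if m = n then d n else 0)"
      using orth by (intro sum.cong) auto
    then show "c m * (\<Sum>n\<in>I. d n * (e m \<bullet> e n)) = c m * d m"
      using \<open>m \<in> I\<close> \<open>finite I\<close> by simp
  qed
  finally show ?thesis .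
qed

lemma norm_projL2_le:
  fixes e :: "nat \<Rightarrow> 'h::real_inner"
  assumes "\<forall>m\<in>{1..k}. \<forall>n\<in>{1..k}. e m \<bullet> e n = (if m = n then 1 else 0)"
  shows "norm (projL2 k e h) \<le> norm h"
proof -
  have "(norm (projL2 k e h))\<^sup>2 = (\<Sum>m\<in>{1..k}. (e m \<bullet> h) * (e m \<bullet> h))"
    unfolding power2_norm_eq_inner projL2_def by (rule inner_sum_orthonormal[OF _ assms]) simp
  also have "\<dots> = h \<bullet> projL2 k e h"
    unfolding projL2_def by (simp add: inner_sum_right inner_commute)
  also have "\<dots> \<le> norm h * norm (projL2 k e h)"
    by (rule norm_cauchy_schwarz)
  finally show ?thesis
    by (cases "projL2 k e h = 0") (auto simp: power2_eq_square mult_le_cancel_right)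
qed

lemma norm_scaleR_projL2_normalized_less:
  fixes e :: "nat \<Rightarrow> 'h::real_inner"
  assumes "\<forall>m\<in>{1..k}. \<forall>n\<in>{1..k}. e m \<bullet> e n = (if m = n then 1 else 0)"
    and "h \<noteq> 0" "\<bar>lam\<bar> < 1"
  shows "norm (lam *\<^sub>R (projL2 k e h /\<^sub>R norm h)) < 1"
proof -
  have "norm (projL2 k e h /\<^sub>R norm h) \<le> 1"
    using norm_projL2_le[OF assms(1), of h] assms(2) by (simp add: field_simps)
  then have "\<bar>lam\<bar> * norm (projL2 k e h /\<^sub>R norm h) < 1"
    using assms(3) by (meson abs_ge_zero le_less_trans mult_left_le)
  then show ?thesis
    by (simp only: norm_scaleR[of lam])
qed

lemma pairC_scaleR_projP:
  "pairC (lam *\<^sub>R projP k e u) h = of_real lam * (\<Sum>m\<in>{1..k}. of_real (e m \<bullet> h) * u (e m))"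
  by (rule complex_eqI)
     (simp_all add: pairC_def projP_def inner_sum_left sum_distrib_left algebra_simps)

locale white_noise =
  fixes T :: "'h::real_inner set" and M :: "'w measure" and U :: "'h \<Rightarrow> 'w \<Rightarrow> complex"
  assumes complex_white_noise: "complex_white_noise T M U"
    and zero_mem: "0 \<in> T"
begin

sublocale prob_space M
  using complex_white_noise by (simp add: complex_white_noise_def)

lemma lincomb_mem: "a \<in> T \<Longrightarrow> b \<in> T \<Longrightarrow> r *\<^sub>R a + s *\<^sub>R b \<in> T"
  using complex_white_noise by (simp add: complex_white_noise_def)

lemma scaleR_mem: "a \<in> T \<Longrightarrow> r *\<^sub>R a \<in> T"
  using lincomb_mem[of a 0 r 0] zero_mem by simp

lemma add_mem: "a \<in> T \<Longrightarrow> b \<in> T \<Longrightarrow> a + b \<in> T"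
  using lincomb_mem[of a b 1 1] by simp

lemma sum_mem: "(\<And>m. m \<in> I \<Longrightarrow> e m \<in> T) \<Longrightarrow> (\<Sum>m\<in>I. c m *\<^sub>R e m) \<in> T"
  by (induction I rule: infinite_finite_induct) (auto intro: zero_mem add_mem scaleR_mem)

lemma borel_measurable_U: "h \<in> T \<Longrightarrow> U h \<in> borel_measurable M"
  using complex_white_noise by (simp add: complex_white_noise_def)

lemma U_lincomb:
  "w \<in> space M \<Longrightarrow> a \<in> T \<Longrightarrow> b \<in> T \<Longrightarrow> U (r *\<^sub>R a + s *\<^sub>R b) w = of_real r * U a w + of_real s * U b w"
  using complex_white_noise by (simp add: complex_white_noise_def)

lemma U_scaleR: "w \<in> space M \<Longrightarrow> a \<in> T \<Longrightarrow> U (r *\<^sub>R a) w = of_real r * U a w"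
  using U_lincomb[of w a 0 r 0] zero_mem by simp

lemma U_zero: "w \<in> space M \<Longrightarrow> U 0 w = 0"
  using U_scaleR[of w 0 0] zero_mem by simp

lemma U_add: "w \<in> space M \<Longrightarrow> a \<in> T \<Longrightarrow> b \<in> T \<Longrightarrow> U (a + b) w = U a w + U b w"
  using U_lincomb[of w a b 1 1] by simp

lemma U_sum:
  assumes "w \<in> space M" and "\<And>m. m \<in> I \<Longrightarrow> e m \<in> T"
  shows "U (\<Sum>m\<in>I. c m *\<^sub>R e m) w = (\<Sum>m\<in>I. of_real (c m) * U (e m) w)"
  using assms(2)
proof (induction I rule: infinite_finite_induct)
  case (insert m I)
  then show ?case
    by (simp add: U_add U_scaleR scaleR_mem sum_mem assms(1))
qed (simp_all add: U_zero assms(1))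

lemma char_Re_Im:
  "a \<in> T \<Longrightarrow> b \<in> T \<Longrightarrow> (\<integral>w. exp (\<i> * of_real (Re (U a w) + Im (U b w))) \<partial>M)
     = exp (- of_real ((norm a)\<^sup>2 + (norm b)\<^sup>2) / 4)"
  using complex_white_noise by (simp add: complex_white_noise_def)

lemma distr_Im_U:
  assumes "h \<in> T"
  shows "distr M borel (\<lambda>w. Im (U h w))
       = distr std_normal_distribution borel (\<lambda>x. norm h / sqrt 2 * x)"
    (is "?L = ?R")
proof (rule Levy_uniqueness)
  have [measurable]: "U h \<in> borel_measurable M"
    using assms by (rule borel_measurable_U)
  show "real_distribution ?L"
    by (rule real_distribution_distr) simp
  show "real_distribution ?R"
    by (intro prob_space.real_distribution_distr prob_space_std_normal) simp
  show "char ?L = char ?R"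
  proof
    fix r
    have "char ?L r = (\<integral>w. exp (\<i> * of_real (Re (U 0 w) + Im (U (r *\<^sub>R h) w))) \<partial>M)"
      unfolding char_def using assms
      by (subst integral_distr) (auto simp: U_zero U_scaleR intro!: Bochner_Integration.integral_cong)
    also have "\<dots> = exp (- of_real ((norm (0::'h))\<^sup>2 + (norm (r *\<^sub>R h))\<^sup>2) / 4)"
      using assms by (intro char_Re_Im zero_mem scaleR_mem)
    also have "\<dots> = of_real (exp (- ((norm (0::'h))\<^sup>2 + (norm (r *\<^sub>R h))\<^sup>2) / 4))"
      by (simp flip: exp_of_real)
    also have "\<dots> = char std_normal_distribution (r * (norm h / sqrt 2))"
      by (simp add: char_std_normal_distribution power_mult_distrib power_divide)
    also have "\<dots> = char ?R r"
      unfolding char_def by (subst integral_distr) (auto simp: mult.assoc)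
    finally show "char ?L r = char ?R r" .
  qed
qed

lemma integrable_Im_U_iff:
  fixes g :: "real \<Rightarrow> real"
  assumes [measurable]: "g \<in> borel_measurable borel" and "h \<in> T"
  shows "integrable M (\<lambda>w. g (Im (U h w)))
     \<longleftrightarrow> integrable std_normal_distribution (\<lambda>x. g (norm h / sqrt 2 * x))"
proof -
  have [measurable]: "U h \<in> borel_measurable M"
    using assms(2) by (rule borel_measurable_U)
  have "integrable M (\<lambda>w. g (Im (U h w))) \<longleftrightarrow> integrable (distr M borel (\<lambda>w. Im (U h w))) g"
    by (subst integrable_distr_eq) auto
  also have "\<dots> \<longleftrightarrow> integrable std_normal_distribution (\<lambda>x. g (norm h / sqrt 2 * x))"
    unfolding distr_Im_U[OF assms(2)] by (subst integrable_distr_eq) auto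
  finally show ?thesis .
qed

lemma integrable_exp_Im_U: "h \<in> T \<Longrightarrow> integrable M (\<lambda>w. exp (t * Im (U h w)))"
  using integrable_Im_U_iff[of "\<lambda>x. exp (t * x)" h]
    integrable_std_normal_exp[of "t * (norm h / sqrt 2)"]
  by (simp add: mult.assoc)

lemma integrable_exp_Im_U_square:
  assumes "h \<in> T" "norm h < 1"
  shows "integrable M (\<lambda>w. exp ((Im (U h w))\<^sup>2))"
proof -
  have "(norm h)\<^sup>2 < 1"
    using assms(2) by (simp add: power_less_one_iff abs_less_iff)
  then have "integrable std_normal_distribution (\<lambda>x. exp ((norm h)\<^sup>2 * x\<^sup>2 / 2))"
    by (rule std_normal_exp_square)
  then show ?thesis
    using integrable_Im_U_iff[of "\<lambda>x. exp (x\<^sup>2)" h] assms(1)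
    by (simp add: power_mult_distrib power_divide)
qed

lemma integral_exp_Im_U_Re_U:
  assumes "p \<in> T" "q \<in> T"
  shows "(\<integral>w. exp (of_real (Im (U q w)) + \<i> * of_real (Re (U p w))) \<partial>M)
       = exp (of_real (((norm q)\<^sup>2 - (norm p)\<^sup>2) / 4))"
proof -
  have [measurable]: "U p \<in> borel_measurable M" "U q \<in> borel_measurable M"
    using assms by (auto intro: borel_measurable_U)
  have "(\<integral>w. exp (1 * of_real (Im (U q w))) * exp (\<i> * of_real (Re (U p w))) \<partial>M)
      = exp ((1\<^sup>2 * of_real ((norm q)\<^sup>2) - of_real ((norm p)\<^sup>2)) / 4)"
  proof (rule integral_cexp_eq_entire)
    show "(\<lambda>z. exp ((z\<^sup>2 * of_real ((norm q)\<^sup>2) - of_real ((norm p)\<^sup>2)) / 4)) holomorphic_on UNIV"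
      by (intro holomorphic_intros) auto
    show "integrable M (\<lambda>w. exp (t * Im (U q w)))" for t
      using assms(2) by (rule integrable_exp_Im_U)
    show "(\<integral>w. exp (\<i> * of_real (r * Im (U q w))) * exp (\<i> * of_real (Re (U p w))) \<partial>M)
        = exp (((\<i> * of_real r)\<^sup>2 * of_real ((norm q)\<^sup>2) - of_real ((norm p)\<^sup>2)) / 4)" for r
    proof -
      have "(\<integral>w. exp (\<i> * of_real (r * Im (U q w))) * exp (\<i> * of_real (Re (U p w))) \<partial>M)
          = (\<integral>w. exp (\<i> * of_real (Re (U p w) + Im (U (r *\<^sub>R q) w))) \<partial>M)"
        using assms by (intro Bochner_Integration.integral_cong)
          (auto simp: U_scaleR mult_exp_exp algebra_simps)
      also have "\<dots> = exp (- of_real ((norm p)\<^sup>2 + (norm (r *\<^sub>R q))\<^sup>2) / 4)"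
        using assms by (intro char_Re_Im scaleR_mem)
      also have "\<dots> = exp (((\<i> * of_real r)\<^sup>2 * of_real ((norm q)\<^sup>2) - of_real ((norm p)\<^sup>2)) / 4)"
        by (rule arg_cong[where f = exp]) (simp add: power_mult_distrib field_simps)
      finally show ?thesis .
    qed
  qed auto
  then show ?thesis
    by (simp add: mult_exp_exp diff_divide_distrib)
qed

lemma integral_exp_cnj_U_mult_exp_U:
  assumes "a \<in> T" "b \<in> T"
  shows "(\<integral>w. exp (\<i> * cnj (U b w) * of_real y) * exp (\<i> * U a w * of_real x) \<partial>M)
       = exp (- of_real (inner a b * x * y))"
proof -
  define p where "p = x *\<^sub>R a + y *\<^sub>R b"
  define q where "q = (- x) *\<^sub>R a + y *\<^sub>R b"
  have "(\<integral>w. exp (\<i> * cnj (U b w) * of_real y) * exp (\<i> * U a w * of_real x) \<partial>M)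
      = (\<integral>w. exp (of_real (Im (U q w)) + \<i> * of_real (Re (U p w))) \<partial>M)"
  proof (rule Bochner_Integration.integral_cong[OF refl])
    fix w assume "w \<in> space M"
    then have "U p w = of_real x * U a w + of_real y * U b w"
      and "U q w = of_real (- x) * U a w + of_real y * U b w"
      unfolding p_def q_def using assms by (simp_all only: U_lincomb)
    then have "\<i> * cnj (U b w) * of_real y + \<i> * U a w * of_real x
        = of_real (Im (U q w)) + \<i> * of_real (Re (U p w))"
      by (simp add: complex_eq_iff algebra_simps)
    then show "exp (\<i> * cnj (U b w) * of_real y) * exp (\<i> * U a w * of_real x)
        = exp (of_real (Im (U q w)) + \<i> * of_real (Re (U p w)))"
      by (simp add: mult_exp_exp)
  qed
  also have "\<dots> = exp (of_real (((norm q)\<^sup>2 - (norm p)\<^sup>2) / 4))"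
    unfolding p_def q_def using assms by (intro integral_exp_Im_U_Re_U lincomb_mem)
  also have "((norm q)\<^sup>2 - (norm p)\<^sup>2) / 4 = - (inner a b * x * y)"
    unfolding p_def q_def power2_norm_eq_inner
    by (simp add: inner_add_left inner_add_right inner_commute algebra_simps)
  finally show ?thesis
    by simp
qed

lemma integral_exp_U_mult_exp_neg_square_cnj_U:
  assumes "a \<in> T" "b \<in> T" "norm b < 1"
  shows "(\<integral>w. exp (\<i> * U a w * of_real x) * exp (- (cnj (U b w))\<^sup>2 / 2) \<partial>M)
       = of_real (exp ((inner a b * x)\<^sup>2 / 2))"
proof -
  have [measurable]: "U a \<in> borel_measurable M" "U b \<in> borel_measurable M"
    using assms by (auto intro: borel_measurable_U)
  have "(\<integral>w. exp (\<i> * U a w * of_real x) * exp (- (cnj (U b w))\<^sup>2 / 2) \<partial>M)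
      = (\<integral>w. exp (- (cnj (U b w))\<^sup>2 / 2) * exp (\<i> * U a w * of_real x) \<partial>M)"
    by (simp add: mult.commute)
  also have "\<dots> = (\<integral>y. (\<integral>w. exp (\<i> * cnj (U b w) * of_real y) * exp (\<i> * U a w * of_real x) \<partial>M)
                      \<partial>std_normal_distribution)"
  proof (rule integral_gaussian_linearization)
    show "integrable M (\<lambda>w. exp ((Im (cnj (U b w)))\<^sup>2 / 2) * norm (exp (\<i> * U a w * of_real x)))"
    proof (rule integrable_bounded_by_exp_add)
      show "integrable M (\<lambda>w. exp (2 * ((Im (U b w))\<^sup>2 / 2)))"
        using integrable_exp_Im_U_square assms by simp
      show "integrable M (\<lambda>w. exp (2 * (- x * Im (U a w))))"
        using integrable_exp_Im_U assms by (simp only: mult.assoc[symmetric])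
      show "norm (exp ((Im (cnj (U b w)))\<^sup>2 / 2) * norm (exp (\<i> * U a w * of_real x)))
          \<le> exp ((Im (U b w))\<^sup>2 / 2 + - x * Im (U a w))" for w
        by (simp add: mult_exp_exp algebra_simps)
    qed measurable
  qed (auto simp: sigma_finite_measure_axioms)
  also have "\<dots> = (\<integral>y. exp (- of_real (inner a b * x) * of_real y) \<partial>std_normal_distribution)"
    using assms by (simp add: integral_exp_cnj_U_mult_exp_U)
  also have "\<dots> = of_real (exp ((inner a b * x)\<^sup>2 / 2))"
    using integral_std_normal_cexp[of "- of_real (inner a b * x)"]
    by (simp add: power_mult_distrib mult.assoc flip: exp_of_real)
  finally show ?thesis .
qed

lemma integral_exp_neg_square_U_mult_cnj_U:
  assumes "a \<in> T" "b \<in> T" "norm a < 1" "norm b < 1"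
  shows "(\<integral>w. exp (- (U a w)\<^sup>2 / 2) * exp (- (cnj (U b w))\<^sup>2 / 2) \<partial>M)
       = of_real (1 / sqrt (1 - (inner a b)\<^sup>2))"
proof -
  have [measurable]: "U a \<in> borel_measurable M" "U b \<in> borel_measurable M"
    using assms by (auto intro: borel_measurable_U)
  have "(\<integral>w. exp (- (U a w)\<^sup>2 / 2) * exp (- (cnj (U b w))\<^sup>2 / 2) \<partial>M)
      = (\<integral>x. (\<integral>w. exp (\<i> * U a w * of_real x) * exp (- (cnj (U b w))\<^sup>2 / 2) \<partial>M)
             \<partial>std_normal_distribution)"
  proof (rule integral_gaussian_linearization)
    show "integrable M (\<lambda>w. exp ((Im (U a w))\<^sup>2 / 2) * norm (exp (- (cnj (U b w))\<^sup>2 / 2)))"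
    proof (rule integrable_bounded_by_exp_add)
      show "integrable M (\<lambda>w. exp (2 * ((Im (U a w))\<^sup>2 / 2)))"
        "integrable M (\<lambda>w. exp (2 * ((Im (U b w))\<^sup>2 / 2)))"
        using integrable_exp_Im_U_square assms by simp_all
      show "norm (exp ((Im (U a w))\<^sup>2 / 2) * norm (exp (- (cnj (U b w))\<^sup>2 / 2)))
          \<le> exp ((Im (U a w))\<^sup>2 / 2 + (Im (U b w))\<^sup>2 / 2)" for w
        using norm_exp_neg_square_le[of "cnj (U b w)"] by (simp add: exp_add)
    qed measurable
  qed (auto simp: sigma_finite_measure_axioms)
  also have "\<dots> = (\<integral>x. of_real (exp ((inner a b)\<^sup>2 * x\<^sup>2 / 2)) \<partial>std_normal_distribution)"
    using assms by (intro Bochner_Integration.integral_cong refl)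
      (simp only: integral_exp_U_mult_exp_neg_square_cnj_U power_mult_distrib)
  also have "\<dots> = of_real (1 / sqrt (1 - (inner a b)\<^sup>2))"
  proof -
    have "\<bar>inner a b\<bar> < 1"
      using Cauchy_Schwarz_ineq2[of a b] mult_strict_mono'[of "norm a" 1 "norm b" 1] assms(3,4)
      by simp
    then have "(inner a b)\<^sup>2 < 1"
      by (simp add: abs_square_less_1)
    then show ?thesis
      by (simp add: std_normal_exp_square(2))
  qed
  finally show ?thesis .
qed

lemma S_donsker_scaleR_projP:
  assumes "h \<noteq> 0" "w \<in> space M" "\<forall>m\<in>{1..k}. e m \<in> T"
  shows "S_donsker h (lam *\<^sub>R projP k e (\<lambda>h'. U h' w))
       = exp (- (U (lam *\<^sub>R (projL2 k e h /\<^sub>R norm h)) w)\<^sup>2 / 2) / of_real (sqrt (2 * pi) * norm h)"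
proof -
  have P_mem: "projL2 k e h \<in> T"
    unfolding projL2_def using assms(3) by (intro sum_mem) auto
  have "pairC (lam *\<^sub>R projP k e (\<lambda>h'. U h' w)) h = of_real lam * U (projL2 k e h) w"
    unfolding pairC_scaleR_projP projL2_def using assms(2,3)
    by (subst U_sum) (auto simp: inner_commute)
  also have "\<dots> = of_real (norm h) * U (lam *\<^sub>R (projL2 k e h /\<^sub>R norm h)) w"
    using assms(1,2) P_mem by (simp add: U_scaleR scaleR_mem)
  finally show ?thesis
    using assms(1) by (simp add: S_donsker_def power_mult_distrib)
qed

lemma S_donsker_mult_cnj_S_donsker:
  assumes "f \<noteq> 0" "g \<noteq> 0" "w \<in> space M" "\<forall>m\<in>{1..k}. e m \<in> T"
  shows "S_donsker f (lam *\<^sub>R projP k e (\<lambda>h. U h w))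
         * cnj (S_donsker g (lam *\<^sub>R projP k e (\<lambda>h. U h w)))
       = of_real (1 / (2 * pi * norm f * norm g))
         * (exp (- (U (lam *\<^sub>R (projL2 k e f /\<^sub>R norm f)) w)\<^sup>2 / 2)
            * exp (- (cnj (U (lam *\<^sub>R (projL2 k e g /\<^sub>R norm g)) w))\<^sup>2 / 2))"
proof -
  have "sqrt (2 * pi) * norm f * (sqrt (2 * pi) * norm g) = 2 * pi * norm f * norm g"
    using real_sqrt_mult_self[of "2 * pi"] by (simp only: ac_simps) simp
  then show ?thesis
    unfolding S_donsker_scaleR_projP[OF assms(1,3,4)] S_donsker_scaleR_projP[OF assms(2,3,4)]
    by (simp add: exp_cnj flip: of_real_mult)
qed

end

theorem lemmaA5:
  fixes T :: "'h::real_inner set" and M :: "'w measure" and U :: "'h \<Rightarrow> 'w \<Rightarrow> complex"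
    and f g :: 'h and k :: nat and e :: "nat \<Rightarrow> 'h" and lam :: real
  assumes nu: "complex_white_noise T M U"
    and f0: "f \<noteq> 0" and g0: "g \<noteq> 0"
    and k1: "k \<ge> 1"
    and eT: "\<forall>m\<in>{1..k}. e m \<in> T"
    and orth: "\<forall>m\<in>{1..k}. \<forall>n\<in>{1..k}. e m \<bullet> e n = (if m = n then 1 else 0)"
    and lam: "0 < lam" "lam < 1"
  shows "(\<integral>w. S_donsker f (lam *\<^sub>R projP k e (\<lambda>h. U h w))
               * cnj (S_donsker g (lam *\<^sub>R projP k e (\<lambda>h. U h w))) \<partial>M)
         = complex_of_real (1 / (2 * pi * norm f * norm g)
             * (1 / sqrt (1 - ((projL2 k e f /\<^sub>R norm f) \<bullet> (projL2 k e g /\<^sub>R norm g))\<^sup>2 * lam ^ 4)))"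
proof -
  have "0 \<in> T"
    using nu eT k1 unfolding complex_white_noise_def
    by (metis atLeastAtMost_iff order_refl scale_zero_left add_0)
  then interpret white_noise T M U
    using nu by unfold_locales
  define a where "a h = lam *\<^sub>R (projL2 k e h /\<^sub>R norm h)" for h
  have a_mem: "a h \<in> T" for h
    unfolding a_def projL2_def using eT by (intro scaleR_mem sum_mem) auto
  have norm_a: "norm (a h) < 1" if "h \<noteq> 0" for h
    unfolding a_def using orth that lam by (intro norm_scaleR_projL2_normalized_less) auto
  have "(\<integral>w. S_donsker f (lam *\<^sub>R projP k e (\<lambda>h. U h w))
               * cnj (S_donsker g (lam *\<^sub>R projP k e (\<lambda>h. U h w))) \<partial>M)
      = (\<integral>w. of_real (1 / (2 * pi * norm f * norm g))
          * (exp (- (U (a f) w)\<^sup>2 / 2) * exp (- (cnj (U (a g) w))\<^sup>2 / 2)) \<partial>M)"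
    using f0 g0 eT by (intro Bochner_Integration.integral_cong refl)
      (simp add: S_donsker_mult_cnj_S_donsker a_def)
  also have "\<dots> = of_real (1 / (2 * pi * norm f * norm g)) * of_real (1 / sqrt (1 - (a f \<bullet> a g)\<^sup>2))"
    by (subst integral_mult_right_zero, subst integral_exp_neg_square_U_mult_cnj_U)
       (use a_mem norm_a f0 g0 in auto)
  also have "(a f \<bullet> a g)\<^sup>2 = ((projL2 k e f /\<^sub>R norm f) \<bullet> (projL2 k e g /\<^sub>R norm g))\<^sup>2 * lam ^ 4"
    by (simp add: a_def power_mult_distrib)
  finally show ?thesis
    by simp
qed

end
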